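(* Let $g$ be analytic, univalent and convex in $\mathbb{D}$ (i.e. $g$ maps $\mathbb{D}$ one-to-one onto a convex domain), and let $f(z)=\sum_{n=0}^\infty a_n z^n$ be analytic in $\mathbb{D}$ with $f\prec g$. Let $\lambda=\operatorname{dist}(g(0),\partial g(\mathbb{D}))$ and assume $\lambda\le 1$. For $0\le r<1$ define $$T_f(r)=\sum_{n=1}^\infty |a_n|r^n+\left(\frac{1}{2-\lambda}+\frac{r}{1-r}\right)\sum_{n=1}^\infty|a_n|^2r^{2n}.$$ Then $T_f(r)\le\lambda$ for all $0\le r\le r_*$, where $r_*\approx0.24683$ is the unique root of $3r^3-5r^2-3r+1=0$ in $(0,1)$. Moreover, for any $\lambda\in(0,1)$ there is a uniquely defined $r_0\in\left(r_*,\tfrac13\right)$, namely the solution in this interval of $$4r^3\lambda^2-(7r^3+3r^2-3r+1)\lambda+6r^3-2r^2-6r+2=0,$$ such that $T_f(r)\le\lambda$ for all $r\in[0,r_0]$.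
   Context: $\mathbb{D}$ is the open unit disk; $\operatorname{dist}(c,\partial\Omega)$ is the Euclidean distance from $c$ to the boundary of $\Omega$. $f\prec g$ means there is an analytic $\omega:\mathbb{D}\to\mathbb{D}$ with $\omega(0)=0$ and $f=g\circ\omega$. *)

theory Defs
  imports "HOL-Complex_Analysis.Complex_Analysis"
begin

definition subordinate :: "(complex \<Rightarrow> complex) \<Rightarrow> (complex \<Rightarrow> complex) \<Rightarrow> bool" where
  "subordinate f g \<longleftrightarrow>
     (\<exists>\<omega>. \<omega> holomorphic_on ball 0 1 \<and> \<omega> ` ball 0 1 \<subseteq> ball 0 1 \<and> \<omega> 0 = 0 \<and>
          (\<forall>z\<in>ball 0 1. f z = g (\<omega> z)))"

definition T_f :: "(nat \<Rightarrow> complex) \<Rightarrow> real \<Rightarrow> real \<Rightarrow> real" where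
  "T_f a lam r =
     (\<Sum>n. norm (a (Suc n)) * r ^ Suc n)
     + (1 / (2 - lam) + r / (1 - r)) * (\<Sum>n. (norm (a (Suc n)))\<^sup>2 * r ^ (2 * Suc n))"

definition r_star :: real where
  "r_star = (THE r. 0 < r \<and> r < 1 \<and> 3 * r ^ 3 - 5 * r ^ 2 - 3 * r + 1 = 0)"

end

theory Submission
  imports Defs
begin

text \<open>
  Let \<Omega> = g(\<bbbD>) and let w be a boundary point of \<Omega> nearest to g(0), so that |g(0) - w| = \<lambda>.
  Since \<Omega> is convex, it lies in a half-plane Re(conj v (\<zeta> - w)) \<ge> 0, and f(\<bbbD>) \<subseteq> \<Omega>; hence
  conj v (f - w) has nonnegative real part and Caratheodory's inequality |c_n| \<le> 2 Re c_0 gives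
  |a_n| \<le> 2 \<lambda> for n \<ge> 1. Summing geometric series then bounds T_f(r) by \<lambda> \<psi>(\<lambda>, r), where
  \<psi> is increasing in both variables; clearing denominators in \<psi>(\<lambda>, r) = 1 gives the polynomial
  equations of the statement (the cubic is the case \<lambda> = 1), so r_* and r_0 are the radii
  where \<psi>(1, \<cdot>) and \<psi>(\<lambda>, \<cdot>) reach 1.

  Caratheodory's inequality is proved without integration: averaging the values on the circle of
  radius r at the N-th roots of unity against powers of a root of unity isolates the coefficients
  whose indices are congruent to 0 or \<plusminus>n modulo N, positivity of the real part bounds this
  filtered combination, and the aliased coefficients of index at least N - n vanish as N \<rightarrow> \<infinity>.
\<close>

section \<open>Caratheodory's coefficient inequality\<close>

definition unity_root :: "nat \<Rightarrow> complex" where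
  "unity_root N = exp (2 * of_real pi * \<i> / of_nat N)"

lemma norm_unity_root [simp]: "norm (unity_root N) = 1"
  by (simp add: unity_root_def)

lemma unity_root_pow_eq_1_iff: "N > 0 \<Longrightarrow> unity_root N ^ m = 1 \<longleftrightarrow> N dvd m"
  unfolding unity_root_def exp_of_nat_mult[symmetric]
  using complex_root_unity_eq_1[of N m] by (simp add: field_simps)

lemma sum_unity_root_powers:
  assumes "N > 0"
  shows "(\<Sum>j<N. unity_root N ^ (j * m)) = (if N dvd m then of_nat N else 0)"
proof -
  let ?w = "unity_root N ^ m"
  have "(\<Sum>j<N. unity_root N ^ (j * m)) = (\<Sum>j<N. ?w ^ j)"
    by (simp add: mult.commute flip: power_mult)
  also have "\<dots> = (if ?w = 1 then of_nat N else (1 - ?w ^ N) / (1 - ?w))"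
    by (rule sum_gp_strict)
  also have "?w ^ N = 1"
    using unity_root_pow_eq_1_iff[OF assms, of "m * N"] by (simp add: power_mult)
  finally show ?thesis
    using unity_root_pow_eq_1_iff[OF assms] by simp
qed

lemma cnj_unity_root_pow:
  assumes "k \<le> N" "N > 0"
  shows "cnj (unity_root N ^ (j * k)) = unity_root N ^ (j * (N - k))"
proof -
  let ?w = "unity_root N ^ (j * k)" and ?v = "unity_root N ^ (j * (N - k))"
  have "j * (N - k) + j * k = j * (N - k + k)"
    by (simp only: add_mult_distrib2)
  then have "j * (N - k) + j * k = N * j"
    using assms by simp
  then have "?v * ?w = (unity_root N ^ N) ^ j"
    by (simp flip: power_add power_mult)
  also have "\<dots> = 1"
    using unity_root_pow_eq_1_iff[OF assms(2), of N] by simp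
  finally have v: "?v * ?w = 1" .
  have w: "cnj ?w * ?w = 1"
    using complex_norm_square[of ?w] by (simp add: norm_power mult.commute)
  have "cnj ?w = cnj ?w * (?v * ?w)"
    using v by simp
  also have "\<dots> = ?v * (cnj ?w * ?w)"
    by (simp only: mult_ac)
  finally show ?thesis
    by (simp only: w mult_1_right)
qed

lemma norm_suminf_le_tail:
  fixes b h :: "nat \<Rightarrow> 'a::banach"
  assumes b: "summable (\<lambda>k. norm (b k))"
    and le: "\<And>k. norm (h k) \<le> norm (b k)" and zero: "\<And>k. k < M \<Longrightarrow> h k = 0"
  shows "norm (suminf h) \<le> (\<Sum>k. norm (b (k + M)))"
proof -
  have h: "summable (\<lambda>k. norm (h k))"
    by (rule summable_comparison_test'[OF b]) (simp add: le)
  have "suminf h = (\<Sum>k. h (k + M))"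
    using suminf_split_initial_segment[OF summable_norm_cancel[OF h], of M] zero by simp
  also have "norm \<dots> \<le> (\<Sum>k. norm (h (k + M)))"
    by (rule summable_norm) (rule summable_ignore_initial_segment[OF h])
  also have "\<dots> \<le> (\<Sum>k. norm (b (k + M)))"
    by (intro suminf_le le summable_ignore_initial_segment h b)
  finally show ?thesis .
qed

lemma tail_sums_tendsto_0:
  fixes d :: "nat \<Rightarrow> 'a::real_normed_vector"
  assumes "summable d"
  shows "(\<lambda>M. \<Sum>k. d (k + M)) \<longlonglongrightarrow> 0"
proof -
  have "(\<lambda>M. suminf d - (\<Sum>k<M. d k)) \<longlonglongrightarrow> suminf d - suminf d"
    by (intro tendsto_diff tendsto_const summable_LIMSEQ assms)
  then show ?thesis
    by (simp add: suminf_minus_initial_segment[OF assms])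
qed

definition aliased_coeff :: "(nat \<Rightarrow> complex) \<Rightarrow> nat \<Rightarrow> nat \<Rightarrow> complex" where
  "aliased_coeff b N m = (\<Sum>k. if N dvd (k + m) then b k else 0)"

lemma unity_root_filter:
  fixes b :: "nat \<Rightarrow> complex"
  assumes b: "summable (\<lambda>k. norm (b k))" and N: "N > 0"
  shows "(\<Sum>j<N. (\<Sum>k. b k * (unity_root N ^ j) ^ k) * unity_root N ^ (j * m))
    = of_nat N * aliased_coeff b N m"
proof -
  let ?w = "unity_root N"
  have summ: "summable h" if "\<And>k. norm (h k) \<le> norm (b k)" for h :: "nat \<Rightarrow> complex"
    by (rule summable_norm_cancel, rule summable_comparison_test'[OF b]) (simp add: that)
  have twisted: "(\<Sum>k. b k * (?w ^ j) ^ k) * ?w ^ (j * m) = (\<Sum>k. b k * ?w ^ (j * (k + m)))" for j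
  proof -
    have "(\<Sum>k. b k * (?w ^ j) ^ k) * ?w ^ (j * m) = (\<Sum>k. b k * (?w ^ j) ^ k * ?w ^ (j * m))"
      by (rule suminf_mult2, rule summ) (simp add: norm_mult norm_power)
    also have "\<dots> = (\<Sum>k. b k * ?w ^ (j * (k + m)))"
      by (simp add: distrib_left power_add mult.assoc flip: power_mult)
    finally show ?thesis .
  qed
  have "(\<Sum>j<N. (\<Sum>k. b k * (?w ^ j) ^ k) * ?w ^ (j * m)) = (\<Sum>j<N. \<Sum>k. b k * ?w ^ (j * (k + m)))"
    by (simp only: twisted)
  also have "\<dots> = (\<Sum>k. \<Sum>j<N. b k * ?w ^ (j * (k + m)))"
    by (rule suminf_sum[symmetric], rule summ) (simp add: norm_mult norm_power)
  also have "\<dots> = (\<Sum>k. of_nat N * (if N dvd (k + m) then b k else 0))"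
    by (intro suminf_cong) (simp add: sum_unity_root_powers[OF N] flip: sum_distrib_left)
  also have "\<dots> = of_nat N * aliased_coeff b N m"
    unfolding aliased_coeff_def by (rule suminf_mult, rule summ) simp
  finally show ?thesis .
qed

lemma norm_aliased_coeff_le:
  fixes b :: "nat \<Rightarrow> complex"
  assumes b: "summable (\<lambda>k. norm (b k))"
    and re: "\<And>\<zeta>. norm \<zeta> = 1 \<Longrightarrow> 0 \<le> Re (\<Sum>k. b k * \<zeta> ^ k)"
    and "n \<le> N" and N: "N > 0"
  shows "norm (aliased_coeff b N (N - n) + cnj (aliased_coeff b N n)) \<le> 2 * Re (aliased_coeff b N 0)"
proof -
  let ?w = "unity_root N" and ?S = "aliased_coeff b N"
  define X where "X j = (\<Sum>k. b k * (?w ^ j) ^ k)" for j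
  have filter: "(\<Sum>j<N. X j * ?w ^ (j * m)) = of_nat N * ?S m" for m
    unfolding X_def by (rule unity_root_filter[OF b N])
  have Re_X: "0 \<le> Re (X j)" for j
    unfolding X_def by (rule re) (simp add: norm_power)
  have "of_nat N * (?S (N - n) + cnj (?S n))
      = (\<Sum>j<N. X j * ?w ^ (j * (N - n))) + cnj (\<Sum>j<N. X j * ?w ^ (j * n))"
    by (simp add: filter distrib_left)
  also have "\<dots> = (\<Sum>j<N. (X j + cnj (X j)) * ?w ^ (j * (N - n)))"
    by (simp only: cnj_sum complex_cnj_mult cnj_unity_root_pow[OF assms(3) N]
        flip: sum.distrib distrib_right)
  also have "\<dots> = (\<Sum>j<N. of_real (2 * Re (X j)) * ?w ^ (j * (N - n)))"
    by (simp add: complex_add_cnj)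
  finally have "real N * norm (?S (N - n) + cnj (?S n))
      = norm (\<Sum>j<N. of_real (2 * Re (X j)) * ?w ^ (j * (N - n)))"
    by (metis norm_mult norm_of_nat)
  also have "\<dots> \<le> (\<Sum>j<N. norm (of_real (2 * Re (X j)) * ?w ^ (j * (N - n))))"
    by (rule norm_sum)
  also have "\<dots> = 2 * Re (\<Sum>j<N. X j)"
    using Re_X by (simp add: norm_mult norm_power Re_sum sum_distrib_left)
  also have "\<dots> = real N * (2 * Re (?S 0))"
    using filter[of 0] by simp
  finally show ?thesis
    using N by simp
qed

lemma norm_aliased_coeff_diff_le:
  fixes b :: "nat \<Rightarrow> complex"
  assumes b: "summable (\<lambda>k. norm (b k))"
    and only_i: "\<And>k. k < M \<Longrightarrow> N dvd (k + m) \<Longrightarrow> k = i"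
  shows "norm (aliased_coeff b N m - (if N dvd (i + m) then b i else 0)) \<le> (\<Sum>k. norm (b (k + M)))"
proof -
  let ?a = "\<lambda>k. if N dvd (k + m) then b k else 0"
  let ?e = "\<lambda>k. if k = i then ?a k else 0"
  have "summable ?a"
    by (rule summable_norm_cancel, rule summable_comparison_test'[OF b]) simp
  then have "aliased_coeff b N m - (if N dvd (i + m) then b i else 0) = (\<Sum>k. ?a k - ?e k)"
    unfolding aliased_coeff_def
    using suminf_diff[OF _ sums_summable[OF sums_single]] sums_unique[OF sums_single[of i ?a]]
    by simp
  also have "norm \<dots> \<le> (\<Sum>k. norm (b (k + M)))"
  proof (rule norm_suminf_le_tail[OF b])
    show "norm (?a k - ?e k) \<le> norm (b k)" for k
      by simp
    show "?a k - ?e k = 0" if "k < M" for k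
      using only_i[OF that] by (cases "k = i") auto
  qed
  finally show ?thesis .
qed

lemma aliased_coeff_approx:
  fixes b :: "nat \<Rightarrow> complex"
  assumes b: "summable (\<lambda>k. norm (b k))" and n: "1 \<le> n" "n < N"
  defines "T \<equiv> \<Sum>k. norm (b (k + (N - n)))"
  shows "norm (aliased_coeff b N (N - n) - b n) \<le> T"
    and "norm (aliased_coeff b N n) \<le> T"
    and "norm (aliased_coeff b N 0 - b 0) \<le> T"
proof -
  \<comment> \<open>Except for k = n and k = 0 themselves, every k congruent to n, -n or 0 modulo N is \<open>\<ge> N - n\<close>.\<close>
  have multiple: "x = N" if "N dvd x" "0 < x" "x < 2 * N" for x
    using that by auto
  have below: "x = 0" if "N dvd x" "x < N" for x
    using that by auto
  have "norm (aliased_coeff b N (N - n) - (if N dvd (n + (N - n)) then b n else 0)) \<le> T"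
    unfolding T_def by (rule norm_aliased_coeff_diff_le[OF b]) (use n multiple in force)
  then show "norm (aliased_coeff b N (N - n) - b n) \<le> T"
    using n by simp
  have "norm (aliased_coeff b N n - (if N dvd (0 + n) then b 0 else 0)) \<le> T"
    unfolding T_def by (rule norm_aliased_coeff_diff_le[OF b]) (use n in \<open>simp add: nat_dvd_not_less\<close>)
  then show "norm (aliased_coeff b N n) \<le> T"
    using n nat_dvd_not_less[of n N] by simp
  have "norm (aliased_coeff b N 0 - (if N dvd (0 + 0) then b 0 else 0)) \<le> T"
    unfolding T_def by (rule norm_aliased_coeff_diff_le[OF b]) (auto intro: below)
  then show "norm (aliased_coeff b N 0 - b 0) \<le> T"
    by simp
qed

lemma caratheodory_aliasing_bound:
  fixes b :: "nat \<Rightarrow> complex"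
  assumes b: "summable (\<lambda>k. norm (b k))"
    and re: "\<And>\<zeta>. norm \<zeta> = 1 \<Longrightarrow> 0 \<le> Re (\<Sum>k. b k * \<zeta> ^ k)"
    and n: "1 \<le> n" "n < N"
  shows "norm (b n) \<le> 2 * Re (b 0) + 4 * (\<Sum>k. norm (b (k + (N - n))))"
proof -
  let ?S = "aliased_coeff b N"
  have "norm (?S (N - n) + cnj (?S n)) \<le> 2 * Re (?S 0)"
    using n by (intro norm_aliased_coeff_le[OF b re]) auto
  moreover have "norm (b n) \<le> norm (?S (N - n)) + norm (?S (N - n) - b n)"
    using norm_triangle_ineq4[of "?S (N - n)" "?S (N - n) - b n"] by simp
  moreover have "norm (?S (N - n)) \<le> norm (?S (N - n) + cnj (?S n)) + norm (?S n)"
    using norm_triangle_ineq4[of "?S (N - n) + cnj (?S n)" "cnj (?S n)"] by simp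
  moreover have "Re (?S 0) \<le> Re (b 0) + norm (?S 0 - b 0)"
    using complex_Re_le_cmod[of "?S 0 - b 0"] by simp
  ultimately show ?thesis
    using aliased_coeff_approx[OF b n] by linarith
qed

lemma caratheodory_coeff_bound_summable:
  fixes b :: "nat \<Rightarrow> complex"
  assumes b: "summable (\<lambda>k. norm (b k))"
    and re: "\<And>\<zeta>. norm \<zeta> = 1 \<Longrightarrow> 0 \<le> Re (\<Sum>k. b k * \<zeta> ^ k)"
    and n: "1 \<le> n"
  shows "norm (b n) \<le> 2 * Re (b 0)"
proof -
  have "(\<lambda>M. 2 * Re (b 0) + 4 * (\<Sum>k. norm (b (k + M)))) \<longlonglongrightarrow> 2 * Re (b 0) + 4 * 0"
    by (intro tendsto_intros tail_sums_tendsto_0 b)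
  moreover have "\<forall>\<^sub>F M in sequentially. norm (b n) \<le> 2 * Re (b 0) + 4 * (\<Sum>k. norm (b (k + M)))"
  proof (rule eventually_sequentiallyI)
    fix M :: nat assume "1 \<le> M"
    then show "norm (b n) \<le> 2 * Re (b 0) + 4 * (\<Sum>k. norm (b (k + M)))"
      using caratheodory_aliasing_bound[OF b re n, of "M + n"] by simp
  qed
  ultimately show ?thesis
    by (simp add: tendsto_lowerbound)
qed

lemma caratheodory_coeff_bound:
  fixes c :: "nat \<Rightarrow> complex" and F :: "complex \<Rightarrow> complex"
  assumes F: "\<And>z. norm z < 1 \<Longrightarrow> (\<lambda>k. c k * z ^ k) sums F z"
    and re: "\<And>z. norm z < 1 \<Longrightarrow> 0 \<le> Re (F z)"
    and n: "1 \<le> n"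
  shows "norm (c n) \<le> 2 * Re (c 0)"
proof -
  have "norm (c n) * r ^ n \<le> 2 * Re (c 0)" if r: "0 < r" "r < 1" for r :: real
  proof -
    define b where "b k = c k * of_real r ^ k" for k
    have inside: "norm (of_real r :: complex) < norm (of_real ((1 + r) / 2) :: complex)"
      and half: "norm (of_real ((1 + r) / 2) :: complex) < 1"
      using r by (simp_all only: norm_of_real) simp_all
    have "summable (\<lambda>k. norm (b k))"
      unfolding b_def by (rule powser_insidea[OF sums_summable[OF F[OF half]] inside])
    moreover have "0 \<le> Re (\<Sum>k. b k * \<zeta> ^ k)" if "norm \<zeta> = 1" for \<zeta>
    proof -
      have z: "norm (of_real r * \<zeta>) < 1"
        using r that by (simp add: norm_mult)
      have "(\<lambda>k. b k * \<zeta> ^ k) sums F (of_real r * \<zeta>)"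
        using F[OF z] unfolding b_def by (simp add: power_mult_distrib mult.assoc)
      then show ?thesis
        using re[OF z] by (simp add: sums_iff)
    qed
    ultimately have "norm (b n) \<le> 2 * Re (b 0)"
      by (rule caratheodory_coeff_bound_summable[OF _ _ n])
    then show ?thesis
      using r by (simp add: b_def norm_mult norm_power)
  qed
  then have "\<forall>\<^sub>F r in at_left 1. norm (c n) * r ^ n \<le> 2 * Re (c 0)"
    using eventually_at_left_real[of 0 "1 :: real"] by (auto elim: eventually_mono)
  moreover have "((\<lambda>r. norm (c n) * r ^ n) \<longlongrightarrow> norm (c n) * 1 ^ n) (at_left (1 :: real))"
    by (intro tendsto_intros)
  ultimately show ?thesis
    by (simp add: tendsto_upperbound)
qed

section \<open>Coefficients of functions subordinate to a convex map\<close>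

lemma coeff_bound_convex_omitted_point:
  fixes a :: "nat \<Rightarrow> complex" and f :: "complex \<Rightarrow> complex"
  assumes f: "\<And>z. norm z < 1 \<Longrightarrow> (\<lambda>k. a k * z ^ k) sums f z"
    and \<Omega>: "convex \<Omega>" "f ` ball 0 1 \<subseteq> \<Omega>" and w: "w \<notin> \<Omega>"
    and k: "1 \<le> k"
  shows "norm (a k) \<le> 2 * dist (a 0) w"
proof -
  have "\<Omega> \<noteq> {}"
    using \<Omega>(2) by auto
  then obtain v t where v: "v \<noteq> 0" "inner v w \<le> t" "\<And>x. x \<in> \<Omega> \<Longrightarrow> t \<le> inner v x"
    using separating_hyperplane_sets[of "{w}" \<Omega>] \<Omega>(1) w by auto
  have Re_cnj: "Re (cnj v * y) = inner v y" for y
    by (simp add: inner_complex_def)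
  define c where "c k = cnj v * (if k = 0 then a 0 - w else a k)" for k
  have "(\<lambda>k. c k * z ^ k) sums (cnj v * (f z - w))" if "norm z < 1" for z
  proof -
    have "(\<lambda>k. a k * z ^ k - (if k = 0 then w else 0)) sums (f z - w)"
      by (intro sums_diff f that) (rule sums_single)
    then show ?thesis
      unfolding c_def by (rule sums_mult[of _ _ "cnj v", THEN sums_cong[THEN iffD1, rotated]])
        (simp add: algebra_simps)
  qed
  moreover have "0 \<le> Re (cnj v * (f z - w))" if "norm z < 1" for z
  proof -
    have "f z \<in> \<Omega>"
      using \<Omega>(2) that by auto
    then show ?thesis
      using v(2) v(3) unfolding Re_cnj inner_diff_right by fastforce
  qed
  ultimately have "norm (c k) \<le> 2 * Re (c 0)"
    by (rule caratheodory_coeff_bound[OF _ _ k])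
  also have "Re (c 0) = inner v (a 0 - w)"
    unfolding c_def Re_cnj by simp
  also have "\<dots> \<le> norm v * dist (a 0) w"
    unfolding dist_norm by (rule norm_cauchy_schwarz)
  finally show ?thesis
    using k v(1) by (simp add: c_def norm_mult)
qed

lemma inj_holomorphic_ball_image_ne_UNIV:
  fixes g :: "complex \<Rightarrow> complex"
  assumes g: "g holomorphic_on ball 0 1" "inj_on g (ball 0 1)"
  shows "g ` ball 0 1 \<noteq> UNIV"
proof
  assume U: "g ` ball 0 1 = UNIV"
  obtain h where h: "h holomorphic_on g ` ball 0 1" "\<And>z. z \<in> ball 0 1 \<Longrightarrow> h (g z) = z"
    using holomorphic_has_inverse[OF g(1) open_ball g(2)] by metis
  have "range h \<subseteq> ball 0 1"
  proof
    fix y assume "y \<in> range h"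
    then obtain x where x: "y = h x"
      by auto
    have "x \<in> g ` ball 0 1"
      using U by simp
    then show "y \<in> ball 0 1"
      using h(2) x by auto
  qed
  then have "bounded (range h)"
    using bounded_ball bounded_subset by blast
  then obtain c where "\<And>x. h x = c"
    using Liouville_theorem[of h] h(1) U unfolding constant_on_def by auto
  then have "h (g 0) = h (g (1/2))"
    by simp
  then show False
    using h(2)[of 0] h(2)[of "1/2"] by simp
qed

lemma subordinate_convex_coeff_bound:
  fixes f g :: "complex \<Rightarrow> complex" and a :: "nat \<Rightarrow> complex"
  assumes g: "g holomorphic_on ball 0 1" "inj_on g (ball 0 1)" "convex (g ` ball 0 1)"
    and f: "\<forall>z\<in>ball 0 1. (\<lambda>n. a n * z ^ n) sums f z"
    and sub: "subordinate f g" and k: "1 \<le> k"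
  shows "norm (a k) \<le> 2 * infdist (g 0) (frontier (g ` ball 0 1))"
proof -
  define \<Omega> where "\<Omega> = g ` ball 0 1"
  \<comment> \<open>Otherwise the frontier would be empty and the \<open>infdist\<close> a junk 0.\<close>
  have "frontier \<Omega> \<noteq> {}"
    unfolding \<Omega>_def by (rule frontier_not_empty) (use inj_holomorphic_ball_image_ne_UNIV[OF g(1,2)] in auto)
  then obtain w where w: "w \<in> frontier \<Omega>" "infdist (g 0) (frontier \<Omega>) = dist (g 0) w"
    using infdist_attains_inf[OF frontier_closed] by metis
  have "open \<Omega>"
    unfolding \<Omega>_def by (rule open_mapping_thm3[OF g(1) open_ball g(2)])
  then have "w \<notin> \<Omega>"
    using w(1) frontier_disjoint_eq by blast
  obtain \<omega> where \<omega>: "\<omega> ` ball 0 1 \<subseteq> ball 0 1" "\<omega> 0 = 0" "\<forall>z\<in>ball 0 1. f z = g (\<omega> z)"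
    using sub unfolding subordinate_def by blast
  then have "f ` ball 0 1 \<subseteq> \<Omega>"
    unfolding \<Omega>_def by auto
  moreover have "a 0 = g 0"
  proof -
    have "(\<lambda>n. a n * 0 ^ n) sums f 0"
      using f[rule_format, of 0] by simp
    then show ?thesis
      using \<omega>(2,3) by simp
  qed
  ultimately show ?thesis
    using coeff_bound_convex_omitted_point[of a f \<Omega> w k] f g(3) \<open>w \<notin> \<Omega>\<close> k w(2)
    unfolding \<Omega>_def by simp
qed

section \<open>The majorant of T_f and the radii\<close>

definition psi :: "real \<Rightarrow> real \<Rightarrow> real" where
  "psi lam r = 2 * r / (1 - r) + (1 / (2 - lam) + r / (1 - r)) * (4 * lam * r ^ 2 / (1 - r ^ 2))"

lemma suminf_le_geometric:
  fixes x :: "nat \<Rightarrow> real"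
  assumes x: "\<And>n. 0 \<le> x n" "\<And>n. x n \<le> C * q ^ Suc n" and q: "0 \<le> q" "q < 1"
  shows "suminf x \<le> C * q / (1 - q)"
proof -
  have g: "(\<lambda>n. C * q ^ Suc n) sums (C * q / (1 - q))"
    using sums_mult[OF geometric_sums[of q], of "C * q"] q by (simp add: mult.assoc)
  have "summable x"
  proof (rule summable_comparison_test'[OF sums_summable[OF g]])
    show "norm (x n) \<le> C * q ^ Suc n" for n
      using x[of n] by simp
  qed
  then show ?thesis
    using suminf_le[OF x(2) _ sums_summable[OF g]] sums_unique[OF g] by simp
qed

lemma T_f_le_psi:
  fixes a :: "nat \<Rightarrow> complex"
  assumes a: "\<And>k. 1 \<le> k \<Longrightarrow> norm (a k) \<le> 2 * lam" and lam: "lam \<le> 1" and r: "0 \<le> r" "r < 1"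
  shows "T_f a lam r \<le> lam * psi lam r"
proof -
  have "(\<Sum>n. norm (a (Suc n)) * r ^ Suc n) \<le> 2 * lam * r / (1 - r)"
    by (rule suminf_le_geometric) (use a r in \<open>auto intro: mult_right_mono\<close>)
  moreover have "(\<Sum>n. (norm (a (Suc n)))\<^sup>2 * r ^ (2 * Suc n)) \<le> (2 * lam) ^ 2 * r ^ 2 / (1 - r ^ 2)"
  proof (rule suminf_le_geometric)
    show "(norm (a (Suc n)))\<^sup>2 * r ^ (2 * Suc n) \<le> (2 * lam) ^ 2 * (r ^ 2) ^ Suc n" for n
      unfolding power_mult using a[of "Suc n"]
      by (intro mult_right_mono power_mono) auto
    show "r ^ 2 < 1"
      using r power_strict_mono[of r 1 2] by simp
  qed (use r in auto)
  moreover have "0 \<le> 1 / (2 - lam) + r / (1 - r)"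
    using lam r by simp
  ultimately have "T_f a lam r \<le> 2 * lam * r / (1 - r)
      + (1 / (2 - lam) + r / (1 - r)) * ((2 * lam) ^ 2 * r ^ 2 / (1 - r ^ 2))"
    unfolding T_f_def by (meson add_mono mult_left_mono)
  also have "\<dots> = lam * psi lam r"
    unfolding psi_def by (simp add: algebra_simps power2_eq_square)
  finally show ?thesis .
qed

lemma psi_strict_mono_r:
  assumes "0 \<le> lam" "lam \<le> 1" "0 \<le> r" "r < r'" "r' < 1"
  shows "psi lam r < psi lam r'"
proof -
  have frac: "r / (1 - r) < r' / (1 - r')"
    using assms by (intro frac_less) auto
  have sq: "r ^ 2 \<le> r' ^ 2" "r' ^ 2 < 1" "r ^ 2 < 1"
    using assms power_mono[of r r' 2] power_strict_mono[of r' 1 2] power_strict_mono[of r 1 2]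
    by simp_all
  moreover have "r ^ 2 / (1 - r ^ 2) \<le> r' ^ 2 / (1 - r' ^ 2)"
    using sq by (intro frac_le) auto
  moreover have "0 \<le> r ^ 2 / (1 - r ^ 2)" "0 \<le> r / (1 - r)" "0 \<le> 1 / (2 - lam)"
    using assms sq by auto
  ultimately have "(1 / (2 - lam) + r / (1 - r)) * (4 * lam * (r ^ 2 / (1 - r ^ 2)))
      \<le> (1 / (2 - lam) + r' / (1 - r')) * (4 * lam * (r' ^ 2 / (1 - r' ^ 2)))"
    using assms frac by (intro mult_mono add_left_mono mult_left_mono) auto
  moreover have "2 * r / (1 - r) < 2 * r' / (1 - r')"
    using frac by simp
  ultimately show ?thesis
    unfolding psi_def by (simp add: times_divide_eq_right)
qed

lemma psi_strict_mono_lam: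
  assumes "0 \<le> lam" "lam < lam'" "lam' \<le> 1" "0 < r" "r < 1"
  shows "psi lam r < psi lam' r"
proof -
  define s where "s = r ^ 2 / (1 - r ^ 2)"
  have "0 < s"
    unfolding s_def using assms power_strict_mono[of r 1 2] by simp
  have "1 / (2 - lam) + r / (1 - r) \<le> 1 / (2 - lam') + r / (1 - r)"
    using assms by (intro add_right_mono frac_le) auto
  moreover have "4 * lam * s < 4 * lam' * s"
    using assms \<open>0 < s\<close> by simp
  moreover have "0 < 1 / (2 - lam) + r / (1 - r)"
    using assms by (simp add: add_pos_nonneg)
  moreover have "0 \<le> 4 * lam * s"
    using assms \<open>0 < s\<close> by simp
  ultimately have "(1 / (2 - lam) + r / (1 - r)) * (4 * lam * s)
      < (1 / (2 - lam') + r / (1 - r)) * (4 * lam' * s)"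
    by (rule mult_le_less_imp_less)
  then show ?thesis
    unfolding psi_def s_def by (simp add: times_divide_eq_right)
qed

definition r0_poly :: "real \<Rightarrow> real \<Rightarrow> real" where
  "r0_poly lam r = 4 * r ^ 3 * lam ^ 2 - (7 * r ^ 3 + 3 * r ^ 2 - 3 * r + 1) * lam
     + 6 * r ^ 3 - 2 * r ^ 2 - 6 * r + 2"

lemma r0_poly_eq:
  assumes "lam < 2" "0 \<le> r" "r < 1"
  shows "r0_poly lam r = (1 - psi lam r) * ((2 - lam) * (1 - r) ^ 2 * (1 + r))"
proof -
  have clear: "(2 * r / B + (1 / A + r / B) * (X / (B * C))) * (A * B ^ 2 * C)
      = 2 * r * A * B * C + (B + r * A) * X" if "A \<noteq> 0" "B \<noteq> 0" "C \<noteq> 0" for A B C X :: real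
    using that by (simp add: field_simps power2_eq_square)
  have "1 - r ^ 2 = (1 - r) * (1 + r)"
    by (simp add: algebra_simps power2_eq_square)
  then have "psi lam r * ((2 - lam) * (1 - r) ^ 2 * (1 + r))
      = 2 * r * (2 - lam) * (1 - r) * (1 + r) + ((1 - r) + r * (2 - lam)) * (4 * lam * r ^ 2)"
    unfolding psi_def using clear[of "2 - lam" "1 - r" "1 + r"] assms by simp
  then show ?thesis
    by (simp add: r0_poly_def algebra_simps power2_eq_square power3_eq_cube)
qed

lemma r0_poly_eq_0_iff:
  assumes "lam < 2" "0 \<le> r" "r < 1"
  shows "r0_poly lam r = 0 \<longleftrightarrow> psi lam r = 1"
  using assms by (simp add: r0_poly_eq)

lemma r0_poly_pos_iff:
  assumes "lam < 2" "0 \<le> r" "r < 1"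
  shows "0 < r0_poly lam r \<longleftrightarrow> psi lam r < 1"
proof -
  define D where "D = (2 - lam) * (1 - r) ^ 2 * (1 + r)"
  have "0 < D"
    unfolding D_def using assms by (intro mult_pos_pos) auto
  then show ?thesis
    using r0_poly_eq[OF assms] unfolding D_def[symmetric] by (simp add: zero_less_mult_iff)
qed

lemma r0_poly_root_unique:
  assumes "0 \<le> lam" "lam \<le> 1" and r: "0 \<le> r" "r < 1" "r0_poly lam r = 0"
    and r': "0 \<le> r'" "r' < 1" "r0_poly lam r' = 0"
  shows "r = r'"
proof -
  have "psi lam r = psi lam r'"
    using assms by (simp add: r0_poly_eq_0_iff)
  then show ?thesis
    using psi_strict_mono_r[of lam r r'] psi_strict_mono_r[of lam r' r] assms
    by (cases r r' rule: linorder_cases) auto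
qed

lemma r0_poly_root_between:
  assumes "a < b" "0 < r0_poly lam a" "r0_poly lam b < 0"
  shows "\<exists>r. a < r \<and> r < b \<and> r0_poly lam r = 0"
proof -
  have "\<forall>x. a \<le> x \<and> x \<le> b \<longrightarrow> isCont (r0_poly lam) x"
    unfolding r0_poly_def by (intro allI impI continuous_intros)
  then obtain r where r: "a \<le> r" "r \<le> b" "r0_poly lam r = 0"
    using IVT2[of "r0_poly lam" b 0 a] assms by auto
  moreover have "r \<noteq> a" "r \<noteq> b"
    using assms r by auto
  ultimately show ?thesis
    by (intro exI[of _ r]) auto
qed

lemma r0_poly_1: "r0_poly 1 r = 3 * r ^ 3 - 5 * r ^ 2 - 3 * r + 1"
  by (simp add: r0_poly_def)

lemma r0_poly_1_root_below_third: "\<exists>r. 0 < r \<and> r < 1/3 \<and> r0_poly 1 r = 0"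
  by (rule r0_poly_root_between) (simp_all add: r0_poly_def power3_eq_cube power2_eq_square)

lemma ex1_cubic_root: "\<exists>!r::real. 0 < r \<and> r < 1 \<and> 3 * r ^ 3 - 5 * r ^ 2 - 3 * r + 1 = 0"
proof -
  obtain r where r: "0 < r" "r < 1/3" "r0_poly 1 r = 0"
    using r0_poly_1_root_below_third by blast
  show ?thesis
  proof (rule ex1I[of _ r])
    show "0 < r \<and> r < 1 \<and> 3 * r ^ 3 - 5 * r ^ 2 - 3 * r + 1 = 0"
      using r by (simp add: r0_poly_1)
    show "r' = r" if "0 < r' \<and> r' < 1 \<and> 3 * r' ^ 3 - 5 * r' ^ 2 - 3 * r' + 1 = 0" for r'
      using r0_poly_root_unique[of 1 r' r] that r by (simp add: r0_poly_1)
  qed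
qed

lemma r_star_root: "0 < r_star" "r_star < 1/3" "r0_poly 1 r_star = 0"
proof -
  obtain r where r: "0 < r" "r < 1/3" "r0_poly 1 r = 0"
    using r0_poly_1_root_below_third by blast
  then have "r_star = r"
    unfolding r_star_def by (intro the1_equality[OF ex1_cubic_root]) (simp add: r0_poly_1)
  then show "0 < r_star" "r_star < 1/3" "r0_poly 1 r_star = 0"
    using r by simp_all
qed

lemma psi_1_r_star: "psi 1 r_star = 1"
  using r_star_root r0_poly_eq_0_iff[of 1 r_star] by simp

lemma psi_less_1_at_r_star:
  assumes "0 \<le> lam" "lam < 1"
  shows "psi lam r_star < 1"
  using psi_strict_mono_lam[of lam 1 r_star] assms r_star_root psi_1_r_star by simp

lemma psi_le_1_at_r_star:
  assumes "0 \<le> lam" "lam \<le> 1"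
  shows "psi lam r_star \<le> 1"
  using psi_less_1_at_r_star[of lam] psi_1_r_star assms by (cases "lam = 1") auto

lemma ex1_r0_poly_root:
  assumes "0 < lam" "lam < 1"
  shows "\<exists>!r0. r_star < r0 \<and> r0 < 1/3 \<and> r0_poly lam r0 = 0"
proof -
  have "0 < r0_poly lam r_star"
    using assms r_star_root psi_less_1_at_r_star[of lam] by (simp add: r0_poly_pos_iff)
  moreover have "r0_poly lam (1/3) < 0"
    using assms by (simp add: r0_poly_def power3_eq_cube power2_eq_square algebra_simps)
  ultimately obtain r0 where r0: "r_star < r0" "r0 < 1/3" "r0_poly lam r0 = 0"
    using r0_poly_root_between r_star_root(2) by blast
  show ?thesis
  proof (rule ex1I[of _ r0])
    show "r_star < r0 \<and> r0 < 1/3 \<and> r0_poly lam r0 = 0"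
      using r0 by simp
    fix r assume r: "r_star < r \<and> r < 1/3 \<and> r0_poly lam r = 0"
    then show "r = r0"
      using r0_poly_root_unique[of lam r r0] r0 r_star_root(1) assms by force
  qed
qed

lemma T_f_le_lam:
  fixes a :: "nat \<Rightarrow> complex"
  assumes a: "\<And>k. 1 \<le> k \<Longrightarrow> norm (a k) \<le> 2 * lam" and lam: "lam \<le> 1"
    and r: "0 \<le> r" "r \<le> \<rho>" "\<rho> < 1" and psi: "psi lam \<rho> \<le> 1"
  shows "T_f a lam r \<le> lam"
proof -
  have "0 \<le> lam"
    using a[of 1] norm_ge_zero[of "a 1"] by linarith
  have "T_f a lam r \<le> lam * psi lam r"
    using T_f_le_psi[OF a lam] r by simp
  also have "\<dots> \<le> lam * psi lam \<rho>"
    using psi_strict_mono_r[of lam r \<rho>] \<open>0 \<le> lam\<close> lam r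
    by (cases "r = \<rho>") (auto intro: mult_left_mono)
  also have "\<dots> \<le> lam"
    using psi \<open>0 \<le> lam\<close> mult_left_mono[of "psi lam \<rho>" 1 lam] by simp
  finally show ?thesis .
qed

theorem theorem2:
  fixes f g :: "complex \<Rightarrow> complex" and a :: "nat \<Rightarrow> complex" and lam :: real
  assumes g_holo: "g holomorphic_on ball 0 1"
    and g_inj: "inj_on g (ball 0 1)"
    and g_convex: "convex (g ` ball 0 1)"
    and f_holo: "f holomorphic_on ball 0 1"
    and f_series: "\<forall>z\<in>ball 0 1. (\<lambda>n. a n * z ^ n) sums f z"
    and sub: "subordinate f g"
    and lam_def: "lam = infdist (g 0) (frontier (g ` ball 0 1))"
    and lam_le: "lam \<le> 1"
  shows "(\<exists>!r::real. 0 < r \<and> r < 1 \<and> 3 * r ^ 3 - 5 * r ^ 2 - 3 * r + 1 = 0)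
    \<and> (\<forall>r\<in>{0..r_star}. T_f a lam r \<le> lam)
    \<and> (0 < lam \<and> lam < 1 \<longrightarrow>
         (\<exists>!r0::real. r_star < r0 \<and> r0 < 1/3 \<and>
             4 * r0 ^ 3 * lam ^ 2 - (7 * r0 ^ 3 + 3 * r0 ^ 2 - 3 * r0 + 1) * lam
             + 6 * r0 ^ 3 - 2 * r0 ^ 2 - 6 * r0 + 2 = 0)
       \<and> (\<forall>r0::real. r_star < r0 \<and> r0 < 1/3 \<and>
             4 * r0 ^ 3 * lam ^ 2 - (7 * r0 ^ 3 + 3 * r0 ^ 2 - 3 * r0 + 1) * lam
             + 6 * r0 ^ 3 - 2 * r0 ^ 2 - 6 * r0 + 2 = 0
           \<longrightarrow> (\<forall>r\<in>{0..r0}. T_f a lam r \<le> lam)))"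
proof -
  have coeff: "\<And>k. 1 \<le> k \<Longrightarrow> norm (a k) \<le> 2 * lam"
    unfolding lam_def by (rule subordinate_convex_coeff_bound[OF g_holo g_inj g_convex f_series sub])
  have "0 \<le> lam"
    unfolding lam_def by (rule infdist_nonneg)
  have bound: "\<forall>r\<in>{0..\<rho>}. T_f a lam r \<le> lam" if "\<rho> < 1" "psi lam \<rho> \<le> 1" for \<rho>
    using T_f_le_lam[OF coeff lam_le] that by auto
  have poly: "4 * r ^ 3 * lam ^ 2 - (7 * r ^ 3 + 3 * r ^ 2 - 3 * r + 1) * lam
      + 6 * r ^ 3 - 2 * r ^ 2 - 6 * r + 2 = r0_poly lam r" for r
    by (simp add: r0_poly_def)
  have "\<forall>r\<in>{0..r_star}. T_f a lam r \<le> lam"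
    by (rule bound[OF _ psi_le_1_at_r_star[OF \<open>0 \<le> lam\<close> lam_le]]) (use r_star_root(2) in simp)
  moreover have "\<forall>r\<in>{0..r0}. T_f a lam r \<le> lam"
    if "r_star < r0" "r0 < 1/3" "r0_poly lam r0 = 0" for r0
    using bound[of r0] r0_poly_eq_0_iff[of lam r0] that r_star_root(1) lam_le by simp
  ultimately show ?thesis
    unfolding poly using ex1_cubic_root ex1_r0_poly_root by blast
qed

end
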